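(* Let $m=|V|\ge2$, $v,w\in V$ with $v\ne w$, and $\beta=\frac1m\sum_{u\in V}e_u$ the barycenter of $S$. Define $$\ell_{vw}(x)=\max\{0,n_{vw}^Tx-c\}-\ell_v^{1/2}(x)-\ell_w^{1/2}(x),\qquad n_{vw}=4(e_{vw}-\beta),\quad c=1-\frac4m.$$ Then $\ell_{vw}$ is affine on each corner $S_u$, $u\in V$; $\ell_{vw}(e_{vw})=1$; $\ell_{vw}$ vanishes at every vertex of $S_v$ and of $S_w$ other than $e_{vw}$; and $\ell_{vw}(x)=0$ for all $x\in S_u$ with $u\notin\{v,w\}$.
   Context: $V$ is a finite index set, $e_u$ ($u\in V$) the standard orthonormal basis of $\mathbb{R}^V$, $S=\operatorname{conv}\{e_u:u\in V\}$. For $u\ne w$, $e^\mu_{uw}=(1-\mu)e_u+\mu e_w$, $S_u^\mu=\operatorname{conv}(\{e_u\}\cup\{e_{uw}^\mu:w\ne u\})$, and abbreviations $e_{uw}=e^{1/2}_{uw}=\frac12(e_u+e_w)$, $S_u=S_u^{1/2}$. For $u\in V$, $\ell_u^{1/2}(x)=\max\{0,(n_u)^Tx-d\}$ with $n_u=\frac{2}{m}\sum_{w\ne u}(e_u-e_w)$ and $d=\frac{m/2-1}{m/2}$ (the function $\ell_u^\mu$ with $\ell_u^\mu(x)=\max\{0,(n_u^\mu)^Tx-d_\mu\}$, $n_u^\mu=\frac1{\mu m}\sum_{w\ne u}(e_u-e_w)$, $d_\mu=\frac{(1-\mu)m-1}{\mu m}$, at $\mu=1/2$). *)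

theory Defs
  imports "HOL-Analysis.Analysis"
begin

text \<open>The finite index set V is modelled as a finite type 'n (V = UNIV), so
  R^V is real^'n and m = CARD('n).\<close>

definition ev :: "'n::finite \<Rightarrow> real^'n" where
  "ev u = axis u 1"

definition emu :: "real \<Rightarrow> 'n::finite \<Rightarrow> 'n \<Rightarrow> real^'n" where
  "emu \<mu> u w = (1 - \<mu>) *\<^sub>R ev u + \<mu> *\<^sub>R ev w"

definition Smu :: "real \<Rightarrow> 'n::finite \<Rightarrow> (real^'n) set" where
  "Smu \<mu> u = convex hull (insert (ev u) {emu \<mu> u w | w. w \<noteq> u})"

abbreviation ehalf :: "'n::finite \<Rightarrow> 'n \<Rightarrow> real^'n" where
  "ehalf u w \<equiv> emu (1/2) u w"

abbreviation Shalf :: "'n::finite \<Rightarrow> (real^'n) set" where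
  "Shalf u \<equiv> Smu (1/2) u"

definition nmu :: "real \<Rightarrow> 'n::finite \<Rightarrow> real^'n" where
  "nmu \<mu> u = (1 / (\<mu> * real CARD('n))) *\<^sub>R (\<Sum>w\<in>UNIV - {u}. ev u - ev w)"

definition dmu :: "real \<Rightarrow> 'n::finite itself \<Rightarrow> real" where
  "dmu \<mu> _ = ((1 - \<mu>) * real CARD('n) - 1) / (\<mu> * real CARD('n))"

definition ellmu :: "real \<Rightarrow> 'n::finite \<Rightarrow> real^'n \<Rightarrow> real" where
  "ellmu \<mu> u x = max 0 (nmu \<mu> u \<bullet> x - dmu \<mu> TYPE('n))"

definition bary :: "'n::finite itself \<Rightarrow> real^'n" where
  "bary _ = (1 / real CARD('n)) *\<^sub>R (\<Sum>u\<in>UNIV. ev u)"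

definition ellvw :: "'n::finite \<Rightarrow> 'n \<Rightarrow> real^'n \<Rightarrow> real" where
  "ellvw v w x = max 0 ((4 *\<^sub>R (ehalf v w - bary TYPE('n))) \<bullet> x - (1 - 4 / real CARD('n)))
                 - ellmu (1/2) v x - ellmu (1/2) w x"

definition affine_on_set :: "(real^'n) set \<Rightarrow> (real^'n \<Rightarrow> real) \<Rightarrow> bool" where
  "affine_on_set S f \<longleftrightarrow> (\<exists>a b. \<forall>x\<in>S. f x = a \<bullet> x + b)"

end

theory Submission imports Defs begin

text \<open>On the hyperplane \<open>\<Sum>x = 1\<close> all three hinge functions become functions of the
  coordinates only: \<open>\<ell>\<^sub>v\<^sup>\<mu>(x) = max 0 ((x\<^sub>v - (1 - \<mu>)) / \<mu>)\<close>, and \<open>\<ell>\<^sub>v\<^sub>w\<close> becomes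
  \<open>max 0 (2x\<^sub>v + 2x\<^sub>w - 1) - max 0 (2x\<^sub>v - 1) - max 0 (2x\<^sub>w - 1)\<close>.
  A point of the corner \<open>S\<^sub>u\<close> is a probability vector with \<open>x\<^sub>u \<ge> 1/2\<close>.  On \<open>S\<^sub>v\<close> we have
  \<open>x\<^sub>v \<ge> 1/2 \<ge> x\<^sub>w\<close> and \<open>x\<^sub>v + x\<^sub>w \<le> 1\<close>, so \<open>\<ell>\<^sub>v\<^sub>w(x) = 2x\<^sub>w\<close>; symmetrically on \<open>S\<^sub>w\<close>;
  and on any other corner \<open>x\<^sub>v + x\<^sub>w \<le> 1/2\<close>, so every hinge is inactive.\<close>

lemma inner_ev: "ev u \<bullet> x = x $ u"
  by (simp add: ev_def inner_axis')

lemma ev_component: "ev u $ i = (if i = u then 1 else 0)"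
  by (simp add: ev_def axis_def)

lemma inner_nmu:
  "nmu \<mu> u \<bullet> (x::real^'n::finite)
     = (real CARD('n) * x$u - (\<Sum>i\<in>UNIV. x$i)) / (\<mu> * real CARD('n))"
proof -
  have "(\<Sum>w\<in>UNIV - {u}. ev u - ev w) \<bullet> x = (\<Sum>w\<in>UNIV - {u}. x$u - x$w)"
    by (simp add: inner_sum_left inner_diff_left inner_ev)
  also have "\<dots> = real CARD('n) * x$u - (\<Sum>i\<in>UNIV. x$i)"
    by (simp add: sum_subtractf sum_diff card_Diff_singleton algebra_simps)
  finally show ?thesis
    by (simp add: nmu_def)
qed

lemma inner_bary: "bary TYPE('n::finite) \<bullet> (x::real^'n) = (\<Sum>i\<in>UNIV. x$i) / real CARD('n)"
  by (simp add: bary_def inner_sum_left inner_ev)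

lemma ellmu_on_hyperplane:
  fixes x :: "real^'n::finite"
  assumes "(\<Sum>i\<in>UNIV. x$i) = 1"
  shows "ellmu \<mu> u x = max 0 ((x$u - (1 - \<mu>)) / \<mu>)"
proof -
  have m: "real CARD('n) \<noteq> 0" by simp
  have "nmu \<mu> u \<bullet> x - dmu \<mu> TYPE('n) = ((x$u - (1 - \<mu>)) * real CARD('n)) / (\<mu> * real CARD('n))"
    by (simp add: inner_nmu assms dmu_def diff_divide_distrib[symmetric] algebra_simps)
  also have "\<dots> = (x$u - (1 - \<mu>)) / \<mu>"
    using m by simp
  finally have "nmu \<mu> u \<bullet> x - dmu \<mu> TYPE('n) = (x$u - (1 - \<mu>)) / \<mu>" .
  then show ?thesis
    by (simp add: ellmu_def)
qed

lemma ellvw_on_hyperplane: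
  fixes x :: "real^'n::finite"
  assumes "(\<Sum>i\<in>UNIV. x$i) = 1"
  shows "ellvw v w x = max 0 (2*x$v + 2*x$w - 1) - max 0 (2*x$v - 1) - max 0 (2*x$w - 1)"
proof -
  have "real CARD('n) > 0" by simp
  then have "(4 *\<^sub>R (ehalf v w - bary TYPE('n))) \<bullet> x - (1 - 4 / real CARD('n)) = 2*x$v + 2*x$w - 1"
    by (simp add: emu_def inner_diff_left inner_add_left inner_ev inner_bary assms field_simps)
  moreover have "max 0 ((x$u - (1 - 1/2)) / (1/2)) = max 0 (2*x$u - 1)" for u
    by simp
  ultimately show ?thesis
    by (simp add: ellvw_def ellmu_on_hyperplane[OF assms])
qed

lemma ellvw_commute: "ellvw v w = ellvw w v"
  by (rule ext) (simp add: ellvw_def emu_def add.commute)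

lemma Smu_subset_corner:
  assumes "0 \<le> \<mu>" "\<mu> \<le> 1"
  shows "Smu \<mu> u \<subseteq> {x::real^'n::finite. (\<Sum>i\<in>UNIV. x$i) = 1 \<and> 1 - \<mu> \<le> x$u \<and> (\<forall>i. 0 \<le> x$i)}"
    (is "_ \<subseteq> ?C")
  unfolding Smu_def
proof (rule hull_minimal)
  show "insert (ev u) {emu \<mu> u w |w. w \<noteq> u} \<subseteq> ?C"
    using assms by (auto simp: emu_def ev_component sum.distrib sum_distrib_left[symmetric])
  show "convex ?C"
  proof (rule convexI)
    fix a b :: "real^'n" and p q :: real
    assume a: "a \<in> ?C" and b: "b \<in> ?C" and pq: "0 \<le> p" "0 \<le> q" "p + q = 1"
    have "(\<Sum>i\<in>UNIV. p * a$i + q * b$i) = 1"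
      using a b pq by (simp add: sum.distrib sum_distrib_left[symmetric])
    moreover have "1 - \<mu> \<le> p * a$u + q * b$u"
        using a b pq add_mono[OF mult_left_mono mult_left_mono, of "1 - \<mu>" "a$u" p "1 - \<mu>" "b$u" q]
      by (simp add: distrib_right[symmetric])
    ultimately show "p *\<^sub>R a + q *\<^sub>R b \<in> ?C"
      using a b pq by simp
  qed
qed

lemma Shalf_memD:
  fixes x :: "real^'n::finite"
  assumes "x \<in> Shalf u"
  shows "(\<Sum>i\<in>UNIV. x$i) = 1" "1/2 \<le> x$u" "\<And>i. 0 \<le> x$i"
  using Smu_subset_corner[of "1/2" u] assms by auto

lemma ev_in_Smu: "ev u \<in> Smu \<mu> u"
  unfolding Smu_def by (rule hull_inc) simp

lemma emu_in_Smu: "w \<noteq> u \<Longrightarrow> emu \<mu> u w \<in> Smu \<mu> u"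
  unfolding Smu_def by (rule hull_inc) blast

lemma sum_components_le_one:
  fixes x :: "real^'n::finite"
  assumes "(\<Sum>i\<in>UNIV. x$i) = 1" "\<And>i. 0 \<le> x$i"
  shows "(\<Sum>i\<in>I. x$i) \<le> 1"
  using sum_mono2[of UNIV I "\<lambda>i. x$i"] assms by simp

lemma ellvw_on_Shalf_left:
  assumes "v \<noteq> w" "x \<in> Shalf v"
  shows "ellvw v w x = 2 * x$w"
proof -
  note x = Shalf_memD[OF assms(2)]
  have "x$v + x$w \<le> 1"
    using sum_components_le_one[OF x(1,3), of "{v, w}"] assms(1) by simp
  then show ?thesis
    using x(2) x(3)[of w] by (simp add: ellvw_on_hyperplane[OF x(1)] max_def)
qed

lemma ellvw_on_Shalf_right:
  assumes "v \<noteq> w" "x \<in> Shalf w"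
  shows "ellvw v w x = 2 * x$v"
  using ellvw_on_Shalf_left[of w v x] assms by (simp add: ellvw_commute)

lemma ellvw_on_Shalf_other:
  assumes "v \<noteq> w" "u \<noteq> v" "u \<noteq> w" "x \<in> Shalf u"
  shows "ellvw v w x = 0"
proof -
  note x = Shalf_memD[OF assms(4)]
  have "x$u + x$v + x$w \<le> 1"
    using sum_components_le_one[OF x(1,3), of "{u, v, w}"] assms(1-3) by simp
  then show ?thesis
    using x(2) x(3)[of v] x(3)[of w] by (simp add: ellvw_on_hyperplane[OF x(1)] max_def)
qed

lemma affine_on_set_linear: "(\<And>x. x \<in> S \<Longrightarrow> f x = a \<bullet> x) \<Longrightarrow> affine_on_set S f"
  unfolding affine_on_set_def by (metis add_0_right)

lemma ellvw_affine_on_Shalf: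
  assumes "v \<noteq> w"
  shows "affine_on_set (Shalf u) (ellvw v w)"
proof (rule affine_on_set_linear)
  fix x assume x: "x \<in> Shalf u"
  show "ellvw v w x = (if u = v then 2 *\<^sub>R ev w else if u = w then 2 *\<^sub>R ev v else 0) \<bullet> x"
    using ellvw_on_Shalf_left[OF assms] ellvw_on_Shalf_right[OF assms]
      ellvw_on_Shalf_other[OF assms] x assms
    by (auto simp: inner_ev)
qed

theorem lemmaA2:
  fixes v w :: "'n::finite"
  assumes "CARD('n) \<ge> 2" and "v \<noteq> w"
  shows "(\<forall>u. affine_on_set (Shalf u) (ellvw v w))
    \<and> ellvw v w (ehalf v w) = 1
    \<and> ellvw v w (ev v) = 0 \<and> ellvw v w (ev w) = 0
    \<and> (\<forall>u. u \<noteq> v \<and> u \<noteq> w \<longrightarrow> ellvw v w (ehalf v u) = 0 \<and> ellvw v w (ehalf w u) = 0)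
    \<and> (\<forall>u. u \<noteq> v \<and> u \<noteq> w \<longrightarrow> (\<forall>x\<in>Shalf u. ellvw v w x = 0))"
proof -
  note on_v = ellvw_on_Shalf_left[OF assms(2)] and on_w = ellvw_on_Shalf_right[OF assms(2)]
  have "ellvw v w (ehalf v w) = 1"
    using on_v[OF emu_in_Smu] assms(2) by (simp add: emu_def ev_component)
  moreover have "ellvw v w (ev v) = 0" "ellvw v w (ev w) = 0"
    using on_v[OF ev_in_Smu] on_w[OF ev_in_Smu] assms(2) by (simp_all add: ev_component)
  moreover have "ellvw v w (ehalf v u) = 0" "ellvw v w (ehalf w u) = 0"
    if "u \<noteq> v" "u \<noteq> w" for u
    using on_v[OF emu_in_Smu] on_w[OF emu_in_Smu] that assms(2) by (simp_all add: emu_def ev_component)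
  ultimately show ?thesis
    using ellvw_affine_on_Shalf[OF assms(2)] ellvw_on_Shalf_other[OF assms(2)] by blast
qed

end
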